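(* Let $n=m$ and $\rho=|\Psi\rangle\langle\Psi|$ with $|\Psi\rangle=\frac{1}{\sqrt m}\sum_{i=1}^m|i\rangle|i\rangle$ a maximally entangled state of $\mathbb{C}^m\otimes\mathbb{C}^m$. Then $D_P(\rho)=D_G(\rho)=\frac{m-1}{m}$.
   Context: Generators $\hat\lambda_i$ ($i=1,\dots,m^2-1$) of $SU(m)$ are Hermitian, traceless, with $\mathrm{Tr}(\hat\lambda_i\hat\lambda_j)=2\delta_{ij}$. For a state $\rho$ on $\mathbb{C}^m\otimes\mathbb{C}^n$, $x_i=\frac{m}{2}\mathrm{Tr}[(\hat\lambda_i^A\otimes\mathbb{I})\rho]$, $t_{ij}=\frac{mn}{4}\mathrm{Tr}[(\hat\lambda_i^A\otimes\hat\lambda_j^B)\rho]$, $T=(t_{ij})$, $\mathcal{T}=\sqrt{\frac{2}{m^2n}}\begin{pmatrix}\vec{x} & \sqrt{\frac{2}{n}}T\end{pmatrix}$; $D_P(\rho)=\min_P\|\mathcal{T}-P\mathcal{T}\|^2$ over rank-$(m-1)$ orthogonal projections $P$ on $\mathbb{R}^{m^2-1}$ (Frobenius norm). The geometric discord is $D_G(\rho)=\min_\chi\mathrm{Tr}(\rho-\chi)^2$ over zero-discord states $\chi=\sum_{k=1}^m p_k|k\rangle\langle k|\otimes\rho_k^B$ ($\{|k\rangle\}$ an orthonormal basis of the first factor, $p_k$ probabilities, $\rho_k^B$ states). *)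

theory Defs
  imports "HOL-Analysis.Analysis"
begin

text \<open>Finite-dimensional complex matrices are represented as complex^'n^'n, where
the finite type 'n indexes a fixed orthonormal (computational) basis; its size is CARD('n).
A bipartite system C^m (x) C^n is indexed by the product type 'a \<times> 'b.\<close>

definition mtrace :: "complex^'n^'n \<Rightarrow> complex" where
  "mtrace A = (\<Sum>i\<in>UNIV. A $ i $ i)"

definition adjoint :: "complex^'n^'m \<Rightarrow> complex^'m^'n" where
  "adjoint A = (\<chi> i j. cnj (A $ j $ i))"

definition hermitian :: "complex^'n^'n \<Rightarrow> bool" where
  "hermitian A \<longleftrightarrow> adjoint A = A"

definition cinner :: "complex^'n \<Rightarrow> complex^'n \<Rightarrow> complex" where
  "cinner x y = (\<Sum>i\<in>UNIV. cnj (x $ i) * y $ i)"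

definition psd :: "complex^'n^'n \<Rightarrow> bool" where
  "psd A \<longleftrightarrow> hermitian A \<and> (\<forall>v. Im (cinner v (A *v v)) = 0 \<and> 0 \<le> Re (cinner v (A *v v)))"

definition is_state :: "complex^'n^'n \<Rightarrow> bool" where
  "is_state \<rho> \<longleftrightarrow> psd \<rho> \<and> mtrace \<rho> = 1"

definition kron :: "complex^'a^'a \<Rightarrow> complex^'b^'b \<Rightarrow> complex^('a \<times> 'b)^('a \<times> 'b)" where
  "kron A B = (\<chi> p q. A $ fst p $ fst q * B $ snd p $ snd q)"

definition outer :: "complex^'n \<Rightarrow> complex^'n \<Rightarrow> complex^'n^'n" where
  "outer u v = (\<chi> i j. u $ i * cnj (v $ j))"

definition orthonormal_basis_fam :: "('n \<Rightarrow> complex^'n) \<Rightarrow> bool" where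
  "orthonormal_basis_fam u \<longleftrightarrow> (\<forall>k l. cinner (u k) (u l) = (if k = l then 1 else 0))"

definition su_generators :: "('g::finite \<Rightarrow> complex^'n^'n) \<Rightarrow> bool" where
  "su_generators l \<longleftrightarrow> CARD('g) = CARD('n)^2 - 1
     \<and> (\<forall>i. hermitian (l i) \<and> mtrace (l i) = 0)
     \<and> (\<forall>i j. mtrace (l i ** l j) = (if i = j then 2 else 0))"

text \<open>x_i = (m/2) Tr[(l^A_i (x) I) rho]  (a real number for Hermitian rho).\<close>
definition xvec :: "('ga \<Rightarrow> complex^'a::finite^'a) \<Rightarrow> complex^('a \<times> 'b::finite)^('a \<times> 'b) \<Rightarrow> 'ga \<Rightarrow> real" where
  "xvec la \<rho> i = Re (of_nat CARD('a) / 2 * mtrace (kron (la i) (mat 1 :: complex^'b^'b) ** \<rho>))"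

definition tcoef :: "('ga \<Rightarrow> complex^'a::finite^'a) \<Rightarrow> ('gb \<Rightarrow> complex^'b::finite^'b)
     \<Rightarrow> complex^('a \<times> 'b)^('a \<times> 'b) \<Rightarrow> 'ga \<Rightarrow> 'gb \<Rightarrow> real" where
  "tcoef la lb \<rho> i j = Re (of_nat CARD('a) * of_nat CARD('b) / 4 * mtrace (kron (la i) (lb j) ** \<rho>))"

text \<open>The (m^2-1) x (n^2) matrix  calT = sqrt(2/(m^2 n)) ( x | sqrt(2/n) T );
the column index Inl () is the column x, the columns Inr j are those of T.\<close>
definition calT :: "('ga::finite \<Rightarrow> complex^'a::finite^'a) \<Rightarrow> ('gb::finite \<Rightarrow> complex^'b::finite^'b)
     \<Rightarrow> complex^('a \<times> 'b)^('a \<times> 'b) \<Rightarrow> real^(unit + 'gb)^'ga" where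
  "calT la lb \<rho> = (\<chi> i c. sqrt (2 / (real CARD('a)^2 * real CARD('b))) *
      (case c of Inl _ \<Rightarrow> xvec la \<rho> i
               | Inr j \<Rightarrow> sqrt (2 / real CARD('b)) * tcoef la lb \<rho> i j))"

definition orth_proj :: "real^'g^'g \<Rightarrow> bool" where
  "orth_proj P \<longleftrightarrow> transpose P = P \<and> P ** P = P"

text \<open>D_P(rho) = min over rank-(m-1) orthogonal projections P of ||calT - P calT||^2;
the norm on real^'c^'g is the Frobenius (Hilbert-Schmidt) norm.\<close>
definition D_P :: "('ga::finite \<Rightarrow> complex^'a::finite^'a) \<Rightarrow> ('gb::finite \<Rightarrow> complex^'b::finite^'b)
     \<Rightarrow> complex^('a \<times> 'b)^('a \<times> 'b) \<Rightarrow> real" where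
  "D_P la lb \<rho> = Inf {(norm (calT la lb \<rho> - P ** calT la lb \<rho>))^2 | P.
       orth_proj P \<and> rank P = CARD('a) - 1}"

definition zero_discord :: "complex^('a::finite \<times> 'b::finite)^('a \<times> 'b) \<Rightarrow> bool" where
  "zero_discord \<chi>' \<longleftrightarrow> (\<exists>(u :: 'a \<Rightarrow> complex^'a) (p :: 'a \<Rightarrow> real) (\<sigma> :: 'a \<Rightarrow> complex^'b^'b).
      orthonormal_basis_fam u \<and> (\<forall>k. 0 \<le> p k) \<and> (\<Sum>k\<in>UNIV. p k) = 1 \<and> (\<forall>k. is_state (\<sigma> k))
      \<and> \<chi>' = (\<Sum>k\<in>UNIV. p k *\<^sub>R kron (outer (u k) (u k)) (\<sigma> k)))"

definition D_G :: "complex^('a::finite \<times> 'b::finite)^('a \<times> 'b) \<Rightarrow> real" where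
  "D_G \<rho> = Inf {Re (mtrace ((\<rho> - \<chi>') ** (\<rho> - \<chi>'))) | \<chi>'. zero_discord \<chi>'}"

definition max_ent_vec :: "complex^('a::finite \<times> 'a)" where
  "max_ent_vec = (\<chi> p. if fst p = snd p then complex_of_real (1 / sqrt (real CARD('a))) else 0)"

definition max_ent_state :: "complex^('a::finite \<times> 'a)^('a \<times> 'a)" where
  "max_ent_state = outer max_ent_vec max_ent_vec"

end

theory Submission
  imports Defs
begin

text \<open>For the maximally entangled state \<open>\<rho>\<close> one has
  \<open>Tr (X \<rho>) = (1/m) \<Sigma>\<^sub>a\<^sub>,\<^sub>b X((a,a),(b,b))\<close>.
  For \<open>D_G\<close> and a classical-quantum state \<open>\<chi> = \<Sigma>\<^sub>k p\<^sub>k |u\<^sub>k\<rangle>\<langle>u\<^sub>k| \<otimes> \<sigma>\<^sub>k\<close> this gives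
  \<open>Tr (\<rho> - \<chi>)\<^sup>2 = 1 - (2/m) \<Sigma>\<^sub>k p\<^sub>k \<langle>u\<^sub>k\<^sup>*|\<sigma>\<^sub>k|u\<^sub>k\<^sup>*\<rangle> + \<Sigma>\<^sub>k p\<^sub>k\<^sup>2 Tr \<sigma>\<^sub>k\<^sup>2\<close>,
  and by Cauchy--Schwarz each \<open>k\<close> contributes at least \<open>-1/m\<^sup>2\<close>, with equality for
  \<open>p\<^sub>k = 1/m\<close> and \<open>\<sigma>\<^sub>k = |k\<rangle>\<langle>k|\<close>.

  For \<open>D_P\<close>, the local vector \<open>x\<close> of \<open>\<rho>\<close> vanishes and \<open>t\<^sub>i\<^sub>j = (m/4) Tr (\<lambda>\<^sub>i\<^sup>T \<lambda>\<^sub>j)\<close>,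
  so \<open>calT = \<Omega>/m\<close> where \<open>\<Omega>\<close> has orthonormal rows: the transposed generators are again
  traceless and Hermitian and expand in the \<open>\<lambda>\<^sub>j\<close>. Hence every admissible \<open>P\<close> gives
  \<open>\<parallel>calT - P calT\<parallel>\<^sup>2 = tr (1 - P) / m\<^sup>2 = ((m\<^sup>2 - 1) - (m - 1)) / m\<^sup>2\<close>.\<close>

lemma mtrace_eq_trace: "mtrace = trace"
  by (simp add: fun_eq_iff mtrace_def trace_def)

lemma mtrace_scaleR: "mtrace (c *\<^sub>R A) = of_real c * mtrace A"
  unfolding mtrace_def by (simp add: sum_distrib_left) (simp add: scaleR_conv_of_real)

lemma mtrace_sum: "mtrace (sum f S) = (\<Sum>r\<in>S. mtrace (f r))"
  by (induction S rule: infinite_finite_induct) (auto simp: mtrace_def sum.distrib)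

lemma matrix_add_rdistrib: "(A + B) ** C = A ** C + B ** (C :: 'a::semiring_1^'p^'n)"
  by (simp add: matrix_matrix_mult_def vec_eq_iff ring_distribs sum.distrib)

lemma matrix_diff_ldistrib: "A ** (B - C) = A ** B - A ** (C :: 'a::ring_1^'p^'n)"
  by (simp add: matrix_matrix_mult_def vec_eq_iff ring_distribs sum_subtractf)

lemma matrix_diff_rdistrib: "(A - B) ** C = A ** C - B ** (C :: 'a::ring_1^'p^'n)"
  by (simp add: matrix_matrix_mult_def vec_eq_iff ring_distribs sum_subtractf)

lemma matrix_mult_sum_left: "sum f S ** (B :: 'a::semiring_1^'p^'n) = (\<Sum>r\<in>S. f r ** B)"
  by (induction S rule: infinite_finite_induct) (auto simp: matrix_add_rdistrib)

lemma matrix_mult_sum_right: "(A :: 'a::semiring_1^'n^'m) ** sum f S = (\<Sum>r\<in>S. A ** f r)"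
  by (induction S rule: infinite_finite_induct) (auto simp: matrix_add_ldistrib)

lemma sum_UNIV_prod:
  "(\<Sum>p\<in>(UNIV :: ('a::finite \<times> 'b::finite) set). f p) = (\<Sum>a\<in>UNIV. \<Sum>b\<in>UNIV. f (a, b))"
  using sum.cartesian_product[of "\<lambda>a b. f (a, b)" UNIV UNIV] by simp

lemma sum_UNIV_Plus:
  "(\<Sum>c\<in>(UNIV :: ('a::finite + 'b::finite) set). f c) = (\<Sum>a\<in>UNIV. f (Inl a)) + (\<Sum>b\<in>UNIV. f (Inr b))"
  using sum.Plus[of "UNIV :: 'a set" "UNIV :: 'b set" f] by (simp add: comp_def)

lemma kron_mult: "kron A B ** kron C D = kron (A ** C) (B ** D)"
  unfolding kron_def matrix_matrix_mult_def
  by (simp add: vec_eq_iff sum_UNIV_prod sum_product mult_ac)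

lemma mtrace_kron: "mtrace (kron A B) = mtrace A * mtrace B"
  unfolding kron_def mtrace_def by (simp add: sum_UNIV_prod sum_product)

lemma mtrace_outer_mult: "mtrace (outer a b ** outer c d) = cinner d a * cinner b c"
  unfolding outer_def mtrace_def matrix_matrix_mult_def cinner_def
  by (simp add: sum_product mult_ac)

lemma cnj_hermitian_entry: "hermitian A \<Longrightarrow> cnj (A $ i $ j) = A $ j $ i"
  unfolding hermitian_def adjoint_def by (metis vec_lambda_beta)

lemma Re_mtrace_sq_hermitian:
  "hermitian A \<Longrightarrow> Re (mtrace (A ** A)) = (\<Sum>a\<in>UNIV. \<Sum>b\<in>UNIV. (cmod (A $ a $ b))\<^sup>2)"
proof -
  assume h: "hermitian A"
  have "mtrace (A ** A) = (\<Sum>a\<in>UNIV. \<Sum>b\<in>UNIV. A $ a $ b * cnj (A $ a $ b))"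
    unfolding mtrace_def matrix_matrix_mult_def by (simp add: cnj_hermitian_entry[OF h])
  also have "\<dots> = of_real (\<Sum>a\<in>UNIV. \<Sum>b\<in>UNIV. (cmod (A $ a $ b))\<^sup>2)"
    by (simp flip: complex_norm_square)
  finally show ?thesis by simp
qed

lemma orthonormal_basis_fam_unit:
  "orthonormal_basis_fam u \<Longrightarrow> (\<Sum>a\<in>UNIV. (cmod (u k $ a))\<^sup>2) = 1"
proof -
  assume "orthonormal_basis_fam u"
  then have "cinner (u k) (u k) = 1" by (simp add: orthonormal_basis_fam_def)
  moreover have "cinner (u k) (u k) = of_real (\<Sum>a\<in>UNIV. (cmod (u k $ a))\<^sup>2)"
    unfolding cinner_def by (simp add: mult.commute flip: complex_norm_square)
  ultimately show ?thesis by (metis of_real_eq_1_iff)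
qed

lemma cinner_axis: "cinner (axis k (1::complex)) (axis l 1) = (if k = l then 1 else 0)"
  unfolding cinner_def axis_def
  by (simp add: if_distrib[of "\<lambda>x. x * _"] if_distrib[of cnj] cong: if_cong)

lemma is_state_outer_axis: "is_state (outer (axis k (1::complex)) (axis k 1))"
proof -
  let ?E = "outer (axis k (1::complex)) (axis k 1)"
  have "hermitian ?E"
    unfolding hermitian_def adjoint_def outer_def axis_def by (simp add: vec_eq_iff)
  moreover have "cinner v (?E *v v) = of_real ((cmod (v $ k))\<^sup>2)" for v :: "complex^'a"
  proof -
    have "?E *v v = axis k (v $ k)"
      unfolding outer_def axis_def matrix_vector_mult_def
      by (simp add: vec_eq_iff if_distrib[of "\<lambda>x. x * _"] if_distrib[of cnj] cong: if_cong)
    then show ?thesis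
      unfolding cinner_def axis_def complex_norm_square
      by (simp add: mult.commute if_distrib[of "\<lambda>x. _ * x"] cong: if_cong)
  qed
  moreover have "mtrace ?E = 1"
    unfolding mtrace_def outer_def axis_def
    by (simp add: if_distrib[of "\<lambda>x. x * _"] if_distrib[of cnj] cong: if_cong)
  ultimately show ?thesis unfolding is_state_def psd_def by simp
qed

section \<open>The maximally entangled state\<close>

lemma max_ent_state_entry:
  "(max_ent_state :: complex^('a::finite \<times> 'a)^('a \<times> 'a)) $ p $ q
     = (if fst p = snd p \<and> fst q = snd q then 1 / of_nat CARD('a) else 0)"
  unfolding max_ent_state_def outer_def max_ent_vec_def
  by (auto simp: of_real_mult[symmetric] simp del: of_real_mult)

lemma mtrace_mult_max_ent_state:
  "mtrace (X ** (max_ent_state :: complex^('a::finite \<times> 'a)^('a \<times> 'a)))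
     = (\<Sum>a\<in>UNIV. \<Sum>b\<in>UNIV. X $ (a, a) $ (b, b)) / of_nat CARD('a)"
proof -
  have diag: "(\<Sum>p\<in>UNIV. if fst p = snd p then g p else 0) = (\<Sum>a\<in>UNIV. g (a, a))"
    for g :: "'a \<times> 'a \<Rightarrow> complex"
    by (simp add: sum_UNIV_prod if_distrib cong: if_cong)
  have "mtrace (X ** (max_ent_state :: complex^('a \<times> 'a)^('a \<times> 'a)))
      = (\<Sum>p\<in>UNIV. if fst p = snd p then
           (\<Sum>q\<in>UNIV. if fst q = snd q then X $ p $ q / of_nat CARD('a) else 0) else 0)"
    unfolding mtrace_def matrix_matrix_mult_def
    by (auto simp: max_ent_state_entry intro!: sum.cong)
  also have "\<dots> = (\<Sum>a\<in>UNIV. \<Sum>b\<in>UNIV. X $ (a, a) $ (b, b) / of_nat CARD('a))"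
    by (simp only: diag)
  finally show ?thesis by (simp add: sum_divide_distrib)
qed

lemma mtrace_max_ent_state_sq:
  "mtrace ((max_ent_state :: complex^('a::finite \<times> 'a)^('a \<times> 'a)) ** max_ent_state) = 1"
  by (simp add: mtrace_mult_max_ent_state max_ent_state_entry power2_eq_square)

section \<open>Geometric discord\<close>

definition cq_state ::
  "('a::finite \<Rightarrow> real) \<Rightarrow> ('a \<Rightarrow> complex^'a) \<Rightarrow> ('a \<Rightarrow> complex^'b::finite^'b)
     \<Rightarrow> complex^('a \<times> 'b)^('a \<times> 'b)"
  where "cq_state p u \<sigma> = (\<Sum>k\<in>UNIV. p k *\<^sub>R kron (outer (u k) (u k)) (\<sigma> k))"

lemma zero_discord_iff_cq_state:
  "zero_discord \<chi>' \<longleftrightarrow> (\<exists>u p \<sigma>. orthonormal_basis_fam u \<and> (\<forall>k. 0 \<le> p k) \<and> sum p UNIV = 1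
      \<and> (\<forall>k. is_state (\<sigma> k)) \<and> \<chi>' = cq_state p u \<sigma>)"
  unfolding zero_discord_def cq_state_def by blast

text \<open>The value \<open>\<langle>v\<^sup>*|\<sigma>|v\<^sup>*\<rangle>\<close>; it equals \<open>m\<close> times the overlap of
  \<open>|v\<rangle>\<langle>v| \<otimes> \<sigma>\<close> with the maximally entangled state.\<close>
definition conj_expectation :: "complex^'a \<Rightarrow> complex^'a^'a \<Rightarrow> real" where
  "conj_expectation v \<sigma> = Re (\<Sum>a\<in>UNIV. \<Sum>b\<in>UNIV. v $ a * cnj (v $ b) * \<sigma> $ a $ b)"

lemma mtrace_cq_state_sq:
  assumes "orthonormal_basis_fam u"
  shows "mtrace (cq_state p u \<sigma> ** cq_state p u \<sigma>)
           = (\<Sum>r\<in>UNIV. of_real ((p r)\<^sup>2) * mtrace (\<sigma> r ** \<sigma> r))"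
proof -
  have "mtrace (cq_state p u \<sigma> ** cq_state p u \<sigma>)
      = (\<Sum>r\<in>UNIV. \<Sum>s\<in>UNIV. of_real (p r) * (of_real (p s)
           * (cinner (u r) (u s) * (cinner (u s) (u r) * mtrace (\<sigma> s ** \<sigma> r)))))"
    unfolding cq_state_def
    by (simp add: matrix_mult_sum_left matrix_mult_sum_right scalar_matrix_assoc[symmetric]
        matrix_scalar_ac mtrace_sum mtrace_scaleR kron_mult mtrace_kron mtrace_outer_mult
        mult.assoc sum_distrib_left)
  also have "\<dots> = (\<Sum>r\<in>UNIV. \<Sum>s\<in>UNIV. if r = s then of_real ((p r)\<^sup>2) * mtrace (\<sigma> r ** \<sigma> r) else 0)"
    using assms unfolding orthonormal_basis_fam_def
    by (intro sum.cong refl) (auto simp: power2_eq_square)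
  finally show ?thesis by simp
qed

lemma mtrace_cq_state_mult_max_ent_state:
  "mtrace (cq_state p u \<sigma> ** (max_ent_state :: complex^('a::finite \<times> 'a)^('a \<times> 'a)))
     = (\<Sum>r\<in>UNIV. of_real (p r) * (\<Sum>a\<in>UNIV. \<Sum>b\<in>UNIV. u r $ a * cnj (u r $ b) * \<sigma> r $ a $ b))
         / of_nat CARD('a)"
  unfolding cq_state_def
  by (simp add: matrix_mult_sum_left scalar_matrix_assoc[symmetric] mtrace_sum mtrace_scaleR
      mtrace_mult_max_ent_state kron_def outer_def flip: sum_divide_distrib)

lemma hs_dist_sq_cq_state:
  assumes "orthonormal_basis_fam u"
  shows "Re (mtrace (((max_ent_state :: complex^('a::finite \<times> 'a)^('a \<times> 'a)) - cq_state p u \<sigma>)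
                      ** (max_ent_state - cq_state p u \<sigma>)))
     = 1 - 2 / real CARD('a) * (\<Sum>r\<in>UNIV. p r * conj_expectation (u r) (\<sigma> r))
         + (\<Sum>r\<in>UNIV. (p r)\<^sup>2 * Re (mtrace (\<sigma> r ** \<sigma> r)))"
proof -
  let ?R = "max_ent_state :: complex^('a \<times> 'a)^('a \<times> 'a)"
  let ?C = "cq_state p u \<sigma>"
  have "mtrace ((?R - ?C) ** (?R - ?C))
      = mtrace (?R ** ?R) - 2 * mtrace (?C ** ?R) + mtrace (?C ** ?C)"
    by (simp add: matrix_diff_rdistrib matrix_diff_ldistrib mtrace_eq_trace trace_sub
        trace_mul_sym[of ?R ?C])
  moreover have "Re (mtrace (?C ** ?R))
      = (\<Sum>r\<in>UNIV. p r * conj_expectation (u r) (\<sigma> r)) / real CARD('a)"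
    unfolding mtrace_cq_state_mult_max_ent_state conj_expectation_def Re_divide_of_nat Re_sum by simp
  moreover have "Re (mtrace (?C ** ?C)) = (\<Sum>r\<in>UNIV. (p r)\<^sup>2 * Re (mtrace (\<sigma> r ** \<sigma> r)))"
    unfolding mtrace_cq_state_sq[OF assms] by simp
  ultimately show ?thesis by (simp add: mtrace_max_ent_state_sq)
qed

lemma conj_expectation_sq_le:
  assumes h: "hermitian \<sigma>" and unit: "(\<Sum>a\<in>UNIV. (cmod (v $ a))\<^sup>2) = 1"
  shows "(conj_expectation v \<sigma>)\<^sup>2 \<le> Re (mtrace (\<sigma> ** \<sigma>))"
proof -
  let ?f = "\<lambda>p::'a \<times> 'a. cmod (v $ fst p) * cmod (v $ snd p)"
  let ?g = "\<lambda>p::'a \<times> 'a. cmod (\<sigma> $ fst p $ snd p)"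
  have "\<bar>conj_expectation v \<sigma>\<bar> \<le> cmod (\<Sum>a\<in>UNIV. \<Sum>b\<in>UNIV. v $ a * cnj (v $ b) * \<sigma> $ a $ b)"
    unfolding conj_expectation_def by (rule abs_Re_le_cmod)
  also have "\<dots> \<le> (\<Sum>a\<in>UNIV. \<Sum>b\<in>UNIV. cmod (v $ a * cnj (v $ b) * \<sigma> $ a $ b))"
    by (rule order_trans[OF norm_sum sum_mono[OF norm_sum]])
  also have "\<dots> = (\<Sum>p\<in>UNIV. ?f p * ?g p)"
    by (subst sum_UNIV_prod) (simp only: fst_conv snd_conv norm_mult complex_mod_cnj)
  finally have "\<bar>conj_expectation v \<sigma>\<bar>\<^sup>2 \<le> (\<Sum>p\<in>UNIV. ?f p * ?g p)\<^sup>2"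
    by (rule power_mono) simp
  also have "\<dots> \<le> (\<Sum>p\<in>UNIV. (?f p)\<^sup>2) * (\<Sum>p\<in>UNIV. (?g p)\<^sup>2)"
    by (rule Cauchy_Schwarz_ineq_sum)
  also have "(\<Sum>p\<in>UNIV. (?f p)\<^sup>2) = (\<Sum>a\<in>UNIV. (cmod (v $ a))\<^sup>2) * (\<Sum>b\<in>UNIV. (cmod (v $ b))\<^sup>2)"
    by (subst sum_UNIV_prod) (simp only: fst_conv snd_conv power_mult_distrib sum_product)
  also have "(\<Sum>p\<in>UNIV. (?g p)\<^sup>2) = Re (mtrace (\<sigma> ** \<sigma>))"
    by (subst sum_UNIV_prod) (simp only: fst_conv snd_conv Re_mtrace_sq_hermitian[OF h])
  finally show ?thesis by (simp add: unit)
qed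

lemma quadratic_lower_bound:
  fixes m :: real
  assumes "m > 0" and "a\<^sup>2 \<le> s"
  shows "- 1 / m\<^sup>2 \<le> p\<^sup>2 * s - 2 / m * (p * a)"
proof -
  have "(p * a)\<^sup>2 \<le> p\<^sup>2 * s"
    using assms(2) by (simp add: power_mult_distrib mult_left_mono)
  moreover have "(p * a - 1 / m)\<^sup>2 = (p * a)\<^sup>2 - 2 / m * (p * a) + 1 / m\<^sup>2"
    by (simp add: power2_diff power_divide)
  moreover have "0 \<le> (p * a - 1 / m)\<^sup>2" by simp
  ultimately show ?thesis by linarith
qed

lemma hs_dist_sq_cq_state_ge:
  assumes u: "orthonormal_basis_fam u" and h: "\<And>r. hermitian (\<sigma> r)"
  shows "(real CARD('a) - 1) / real CARD('a)
    \<le> Re (mtrace (((max_ent_state :: complex^('a::finite \<times> 'a)^('a \<times> 'a)) - cq_state p u \<sigma>)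
                    ** (max_ent_state - cq_state p u \<sigma>)))"
proof -
  define m where "m = real CARD('a)"
  have m: "m > 0" unfolding m_def by simp
  have "(\<Sum>r\<in>(UNIV::'a set). - 1 / m\<^sup>2)
      \<le> (\<Sum>r\<in>UNIV. (p r)\<^sup>2 * Re (mtrace (\<sigma> r ** \<sigma> r))
                   - 2 / m * (p r * conj_expectation (u r) (\<sigma> r)))"
    by (intro sum_mono quadratic_lower_bound m conj_expectation_sq_le h
        orthonormal_basis_fam_unit[OF u])
  also have "\<dots> = (\<Sum>r\<in>UNIV. (p r)\<^sup>2 * Re (mtrace (\<sigma> r ** \<sigma> r)))
                   - 2 / m * (\<Sum>r\<in>UNIV. p r * conj_expectation (u r) (\<sigma> r))"
    by (simp add: sum_subtractf sum_distrib_left)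
  finally have "- 1 / m \<le> \<dots>"
    using m by (simp add: m_def power2_eq_square)
  moreover have "(m - 1) / m = 1 - 1 / m" using m by (simp add: field_simps)
  ultimately show ?thesis unfolding hs_dist_sq_cq_state[OF u] m_def[symmetric] by linarith
qed

definition dephased_max_ent_state :: "complex^('a::finite \<times> 'a)^('a \<times> 'a)" where
  "dephased_max_ent_state
     = cq_state (\<lambda>_. 1 / real CARD('a)) (\<lambda>k. axis k 1) (\<lambda>k. outer (axis k 1) (axis k 1))"

lemma zero_discord_dephased_max_ent_state: "zero_discord dephased_max_ent_state"
  unfolding zero_discord_iff_cq_state dephased_max_ent_state_def
  by (intro exI conjI) (auto simp: orthonormal_basis_fam_def cinner_axis is_state_outer_axis)

lemma hs_dist_sq_dephased_max_ent_state:
  "Re (mtrace ((max_ent_state - dephased_max_ent_state)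
                ** (max_ent_state - (dephased_max_ent_state :: complex^('a::finite \<times> 'a)^('a \<times> 'a)))))
     = (real CARD('a) - 1) / real CARD('a)"
proof -
  have u: "orthonormal_basis_fam (\<lambda>k::'a. axis k (1::complex))"
    unfolding orthonormal_basis_fam_def by (simp add: cinner_axis)
  have "conj_expectation (axis r 1) (outer (axis r 1) (axis r (1::complex))) = 1" for r :: 'a
    unfolding conj_expectation_def outer_def axis_def
    by (simp add: if_distrib[of "\<lambda>x. x * _"] if_distrib[of "\<lambda>x. _ * x"] if_distrib[of cnj]
        cong: if_cong)
  moreover have "Re (mtrace (outer (axis r 1) (axis r 1) ** outer (axis r 1) (axis r (1::complex)))) = 1"
    for r :: 'a
    by (simp add: mtrace_outer_mult cinner_axis)
  ultimately show ?thesis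
    unfolding dephased_max_ent_state_def hs_dist_sq_cq_state[OF u]
    by (simp add: field_simps power2_eq_square)
qed

theorem D_G_max_ent_state:
  "D_G (max_ent_state :: complex^('a::finite \<times> 'a)^('a \<times> 'a)) = (real CARD('a) - 1) / real CARD('a)"
proof -
  let ?R = "max_ent_state :: complex^('a \<times> 'a)^('a \<times> 'a)"
  show ?thesis
    unfolding D_G_def
  proof (rule cInf_eq_minimum)
    show "(real CARD('a) - 1) / real CARD('a)
        \<in> {Re (mtrace ((?R - \<chi>') ** (?R - \<chi>'))) | \<chi>'. zero_discord \<chi>'}"
      by (rule CollectI, rule exI[of _ dephased_max_ent_state])
        (simp add: zero_discord_dephased_max_ent_state hs_dist_sq_dephased_max_ent_state)
  next
    fix x
    assume "x \<in> {Re (mtrace ((?R - \<chi>') ** (?R - \<chi>'))) | \<chi>'. zero_discord \<chi>'}"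
    then obtain u p \<sigma> where "orthonormal_basis_fam u" "\<And>k. is_state (\<sigma> k)"
      and "x = Re (mtrace ((?R - cq_state p u \<sigma>) ** (?R - cq_state p u \<sigma>)))"
      unfolding zero_discord_iff_cq_state by blast
    then show "(real CARD('a) - 1) / real CARD('a) \<le> x"
      using hs_dist_sq_cq_state_ge by (metis is_state_def psd_def)
  qed
qed

section \<open>The generators as a real orthogonal basis\<close>

definition hs_inner :: "complex^'a^'a \<Rightarrow> complex^'a^'a \<Rightarrow> complex" where
  "hs_inner x y = (\<Sum>a\<in>UNIV. \<Sum>b\<in>UNIV. cnj (x $ a $ b) * y $ a $ b)"

definition i_scale :: "complex^'a^'a \<Rightarrow> complex^'a^'a" where
  "i_scale x = (\<chi> a b. \<i> * x $ a $ b)"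

lemma inner_eq_Re_hs_inner: "x \<bullet> y = Re (hs_inner x y)"
  unfolding hs_inner_def inner_vec_def inner_complex_def by simp

lemma hs_inner_i_scale_right: "hs_inner x (i_scale y) = \<i> * hs_inner x y"
  unfolding hs_inner_def i_scale_def by (simp add: sum_distrib_left mult_ac)

lemma hs_inner_i_scale_left: "hs_inner (i_scale x) y = - \<i> * hs_inner x y"
  unfolding hs_inner_def i_scale_def by (simp add: sum_distrib_left mult_ac sum_negf)

lemma hs_inner_hermitian: "hermitian x \<Longrightarrow> hs_inner x y = mtrace (x ** y)"
  unfolding hs_inner_def mtrace_def matrix_matrix_mult_def
  by (simp add: cnj_hermitian_entry, subst sum.swap, simp)

lemma cnj_hs_inner_hermitian:
  "hermitian x \<Longrightarrow> hermitian y \<Longrightarrow> cnj (hs_inner x y) = hs_inner x y"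
proof -
  assume hx: "hermitian x" and hy: "hermitian y"
  have "cnj (hs_inner x y) = (\<Sum>a\<in>UNIV. \<Sum>b\<in>UNIV. cnj (x $ b $ a) * y $ b $ a)"
    unfolding hs_inner_def by (simp add: cnj_hermitian_entry[OF hx] cnj_hermitian_entry[OF hy])
  also have "\<dots> = hs_inner x y" unfolding hs_inner_def by (subst sum.swap) simp
  finally show ?thesis .
qed

lemma hs_inner_mat1_left: "hs_inner (mat 1) x = mtrace x"
  unfolding hs_inner_def mtrace_def mat_def
  by (simp add: if_distrib[of "\<lambda>z. z * _"] if_distrib[of cnj] cong: if_cong)

lemma hs_inner_mat1_right: "hs_inner x (mat 1) = cnj (mtrace x)"
  unfolding hs_inner_def mtrace_def mat_def
  by (simp add: if_distrib[of "\<lambda>z. _ * z"] cong: if_cong)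

lemma mtrace_mat1: "mtrace (mat 1 :: complex^'a^'a) = of_nat CARD('a)"
  by (simp add: mtrace_eq_trace trace_I)

lemma mtrace_i_scale: "mtrace (i_scale x) = \<i> * mtrace x"
  unfolding mtrace_def i_scale_def by (simp add: sum_distrib_left)

text \<open>The generators, their multiples by \<open>\<i>\<close>, the identity and its multiple by \<open>\<i>\<close>
  form an orthogonal basis of the \<open>2m\<^sup>2\<close>-dimensional real space of complex matrices.\<close>
definition su_real_frame :: "('g \<Rightarrow> complex^'a^'a) \<Rightarrow> ('g + 'g) + bool \<Rightarrow> complex^'a^'a" where
  "su_real_frame \<mu> k = (case k of Inl (Inl j) \<Rightarrow> \<mu> j | Inl (Inr j) \<Rightarrow> i_scale (\<mu> j)
      | Inr b \<Rightarrow> if b then mat 1 else i_scale (mat 1))"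

lemma inner_su_real_frame:
  assumes "su_generators (\<mu> :: 'g::finite \<Rightarrow> complex^'a::finite^'a)"
  shows "su_real_frame \<mu> k \<bullet> su_real_frame \<mu> l
           = (if k = l then (case k of Inl _ \<Rightarrow> 2 | Inr _ \<Rightarrow> real CARD('a)) else 0)"
proof -
  have h: "\<And>j. hermitian (\<mu> j)" and t: "\<And>j. mtrace (\<mu> j) = 0"
    and tt: "\<And>i j. mtrace (\<mu> i ** \<mu> j) = (if i = j then 2 else 0)"
    using assms unfolding su_generators_def by auto
  show ?thesis
    by (cases k; cases l)
       (auto simp: su_real_frame_def inner_eq_Re_hs_inner hs_inner_i_scale_left
         hs_inner_i_scale_right hs_inner_hermitian[OF h] tt hs_inner_mat1_right
         hs_inner_mat1_left t mtrace_i_scale mtrace_mat1 split: sum.split)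
qed

lemma span_su_real_frame:
  assumes su: "su_generators (\<mu> :: 'g::finite \<Rightarrow> complex^'a::finite^'a)"
  shows "span (range (su_real_frame \<mu>)) = UNIV"
proof -
  let ?f = "su_real_frame \<mu>"
  have pos: "?f k \<bullet> ?f k > 0" for k
    using inner_su_real_frame[OF su, of k k] by (auto split: sum.split)
  have "inj ?f"
  proof (rule injI)
    fix k l assume eq: "?f k = ?f l"
    show "k = l"
    proof (rule ccontr)
      assume "k \<noteq> l"
      then have "?f k \<bullet> ?f l = 0" using inner_su_real_frame[OF su, of k l] by simp
      then show False using pos[of k] eq by simp
    qed
  qed
  have "pairwise orthogonal (range ?f)"
    unfolding pairwise_def orthogonal_def using inner_su_real_frame[OF su] by auto
  moreover have "0 \<notin> range ?f" using pos by (metis inner_zero_left less_irrefl rangeE)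
  ultimately have ind: "independent (range ?f)" by (rule pairwise_orthogonal_independent)
  have "card (range ?f) = CARD(('g + 'g) + bool)"
    using \<open>inj ?f\<close> by (simp add: card_image)
  also have "\<dots> = 2 * CARD('g) + 2"
    using card_Plus[of "UNIV :: ('g + 'g) set" "UNIV :: bool set"]
      card_Plus[of "UNIV :: 'g set" "UNIV :: 'g set"] by simp
  finally have "card (range ?f) = 2 * CARD('g) + 2" .
  moreover have "CARD('g) = CARD('a)\<^sup>2 - 1"
    using su unfolding su_generators_def by simp
  moreover have "CARD('a)\<^sup>2 \<ge> 1" by (simp add: Suc_leI)
  ultimately have "dim (UNIV :: (complex^'a^'a) set) \<le> card (range ?f)"
    by (simp add: power2_eq_square algebra_simps)
  then have "UNIV \<subseteq> span (range ?f)"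
    by (intro card_ge_dim_independent ind) auto
  then show ?thesis by auto
qed

text \<open>A traceless Hermitian matrix is orthogonal to \<open>\<i>\<mu>\<^sub>j\<close>, \<open>1\<close> and \<open>\<i>\<close>,
  so only the generators contribute to its expansion in the frame.\<close>
lemma su_generators_expansion:
  assumes su: "su_generators (\<mu> :: 'g::finite \<Rightarrow> complex^'a::finite^'a)"
    and hx: "hermitian x" and tx: "mtrace x = 0"
  shows "x = (\<Sum>j\<in>UNIV. (x \<bullet> \<mu> j / 2) *\<^sub>R \<mu> j)"
proof -
  have h: "\<And>j. hermitian (\<mu> j)" using su unfolding su_generators_def by auto
  let ?y = "x - (\<Sum>j\<in>UNIV. (x \<bullet> \<mu> j / 2) *\<^sub>R \<mu> j)"
  have "su_real_frame \<mu> k \<bullet> ?y = 0" for k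
  proof -
    have "su_real_frame \<mu> k \<bullet> ?y
        = su_real_frame \<mu> k \<bullet> x - (\<Sum>j\<in>UNIV. (x \<bullet> \<mu> j / 2) * (su_real_frame \<mu> k \<bullet> \<mu> j))"
      by (simp add: inner_diff_right inner_sum_right)
    also have "\<dots> = 0"
    proof (cases k)
      case (Inl a)
      show ?thesis
      proof (cases a)
        case (Inl i)
        have "su_real_frame \<mu> k \<bullet> \<mu> j = (if i = j then 2 else 0)" for j
          using inner_su_real_frame[OF su, of k "Inl (Inl j)"] \<open>k = Inl a\<close> Inl
          by (simp add: su_real_frame_def)
        then show ?thesis using \<open>k = Inl a\<close> Inl
          by (simp add: su_real_frame_def inner_commute if_distrib[of "\<lambda>z. _ * z"] cong: if_cong)
      next
        case (Inr i)
        have "Im (hs_inner (\<mu> i) x) = 0"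
          using cnj_hs_inner_hermitian[OF h hx] by (metis Reals_cnj_iff complex_is_Real_iff)
        moreover have "su_real_frame \<mu> k \<bullet> \<mu> j = 0" for j
          using inner_su_real_frame[OF su, of k "Inl (Inl j)"] \<open>k = Inl a\<close> Inr
          by (simp add: su_real_frame_def)
        ultimately show ?thesis using \<open>k = Inl a\<close> Inr
          by (simp add: su_real_frame_def inner_eq_Re_hs_inner hs_inner_i_scale_left)
      qed
    next
      case (Inr b)
      have "su_real_frame \<mu> k \<bullet> \<mu> j = 0" for j
        using inner_su_real_frame[OF su, of k "Inl (Inl j)"] Inr by (simp add: su_real_frame_def)
      then show ?thesis
        using Inr tx by (cases b) (simp_all add: su_real_frame_def inner_eq_Re_hs_inner
          hs_inner_i_scale_left hs_inner_mat1_left)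
    qed
    finally show ?thesis .
  qed
  then have "orthogonal ?y ?y"
    by (intro orthogonal_to_span[of ?y "range (su_real_frame \<mu>)"])
       (auto simp: span_su_real_frame[OF su] orthogonal_def inner_commute)
  then show ?thesis by (simp add: orthogonal_def)
qed

section \<open>Orthogonal projections\<close>

lemma orth_proj_expansion:
  fixes P :: "real^'n^'n"
  assumes "orth_proj P" and span: "span B = range ((*v) P)"
    and orth: "pairwise orthogonal B" and unit: "\<And>b. b \<in> B \<Longrightarrow> norm b = 1"
  shows "P *v x = (\<Sum>b\<in>B. (b \<bullet> x) *\<^sub>R b)"
proof -
  have T: "transpose P = P" and I: "P ** P = P" using assms unfolding orth_proj_def by auto
  have fin: "finite B" using orth by (rule pairwise_orthogonal_imp_finite)
  have bb: "b \<bullet> c = (if b = c then 1 else 0)" if "b \<in> B" "c \<in> B" for b c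
    using orth unit that by (auto simp: pairwise_def orthogonal_def norm_eq_1)
  have sym: "(P *v z) \<bullet> y = z \<bullet> (P *v y)" for z y
    by (metis T dot_lmul_matrix vector_transpose_matrix)
  let ?w = "P *v x"
  have bw: "b \<bullet> ?w = b \<bullet> x" if "b \<in> B" for b
  proof -
    have "b \<in> range ((*v) P)" using span_base[OF that] span by simp
    then obtain z where z: "b = P *v z" by blast
    have "b \<bullet> ?w = z \<bullet> (P *v ?w)" unfolding z by (rule sym)
    also have "\<dots> = z \<bullet> ?w" by (simp add: matrix_vector_mul_assoc I)
    also have "\<dots> = b \<bullet> x" unfolding z by (rule sym[symmetric])
    finally show ?thesis .
  qed
  let ?y = "?w - (\<Sum>b\<in>B. (b \<bullet> ?w) *\<^sub>R b)"
  have orth_y: "c \<bullet> ?y = 0" if "c \<in> B" for c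
  proof -
    have "c \<bullet> (\<Sum>b\<in>B. (b \<bullet> ?w) *\<^sub>R b) = (\<Sum>b\<in>B. (b \<bullet> ?w) * (c \<bullet> b))"
      by (simp add: inner_sum_right)
    also have "\<dots> = (\<Sum>b\<in>B. if c = b then b \<bullet> ?w else 0)"
      by (intro sum.cong refl) (simp add: bb[OF that])
    also have "\<dots> = c \<bullet> ?w" using fin that by simp
    finally show ?thesis by (simp add: inner_diff_right)
  qed
  have "?w \<in> span B" using span by simp
  moreover have "(\<Sum>b\<in>B. (b \<bullet> ?w) *\<^sub>R b) \<in> span B"
    by (intro span_sum span_scale) (simp add: span_base)
  ultimately have "?y \<in> span B" by (rule span_diff)
  then have "orthogonal ?y ?y"
    by (rule orthogonal_to_span) (use orth_y in \<open>auto simp: orthogonal_def inner_commute\<close>)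
  then show ?thesis using bw by (simp add: orthogonal_def)
qed

lemma trace_orth_proj: "orth_proj (P :: real^'n^'n) \<Longrightarrow> trace P = real (rank P)"
proof -
  assume P: "orth_proj P"
  have V: "subspace (range ((*v) P))"
    by (simp add: linear_subspace_image)
  obtain B where orth: "pairwise orthogonal B" and unit: "\<And>x. x \<in> B \<Longrightarrow> norm x = 1"
    and card: "card B = dim (range ((*v) P))" and span: "span B = range ((*v) P)"
    using orthonormal_basis_subspace[OF V] by metis
  have "P $ i $ i = (\<Sum>b\<in>B. (b $ i)\<^sup>2)" for i
  proof -
    have "P $ i $ i = (P *v axis i 1) $ i"
      by (simp add: matrix_vector_mult_def axis_def if_distrib[of "\<lambda>x. _ * x"] cong: if_cong)
    also have "\<dots> = (\<Sum>b\<in>B. (b $ i)\<^sup>2)"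
      by (simp add: orth_proj_expansion[OF P span orth unit] inner_axis power2_eq_square)
    finally show ?thesis .
  qed
  then have "trace P = (\<Sum>b\<in>B. \<Sum>i\<in>UNIV. (b $ i)\<^sup>2)"
    unfolding trace_def by (simp add: sum.swap[of _ B])
  also have "\<dots> = (\<Sum>b\<in>B. b \<bullet> b)"
    by (simp add: inner_vec_def power2_eq_square)
  also have "\<dots> = (\<Sum>b\<in>B. 1)" by (intro sum.cong refl) (use unit norm_eq_1 in blast)
  finally show ?thesis using card by (simp add: rank_dim_range)
qed

lemma exists_orth_proj_rank:
  assumes "k \<le> CARD('n)"
  shows "\<exists>P :: real^'n^'n. orth_proj P \<and> rank P = k"
proof -
  obtain S :: "'n set" where S: "card S = k"
    using assms obtain_subset_with_card_n by metis
  define P :: "real^'n^'n" where "P = (\<chi> i j. if i = j \<and> i \<in> S then 1 else 0)"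
  have "(\<Sum>k\<in>UNIV. if k = i \<and> k \<in> S then 1 else 0 :: real) = 1" if "i \<in> S" for i
    by (subst sum.cong[OF refl, of _ _ "\<lambda>k. if k = i then 1 else 0"]) (use that in auto)
  then have "orth_proj P"
    unfolding orth_proj_def P_def transpose_def matrix_matrix_mult_def
    by (auto simp: vec_eq_iff if_distrib[of "\<lambda>z. _ * z"] cong: if_cong)
  moreover have "trace P = card S" unfolding P_def trace_def by (simp add: sum.If_cases)
  ultimately show ?thesis using S trace_orth_proj by fastforce
qed

lemma transpose_diff: "transpose (A - B) = transpose A - transpose (B :: 'a::ab_group_add^'n^'m)"
  by (simp add: transpose_def vec_eq_iff)

lemma norm_sq_eq_trace_mult_transpose: "(norm (A :: real^'n^'m))\<^sup>2 = trace (A ** transpose A)"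
  unfolding power2_norm_eq_inner inner_vec_def trace_def matrix_matrix_mult_def transpose_def
  by (simp add: power2_eq_square)

lemma norm_sq_orth_proj_complement:
  fixes P :: "real^'g^'g" and A :: "real^'h^'g"
  assumes "orth_proj P" and rows: "A ** transpose A = mat 1"
  shows "(norm (A - P ** A))\<^sup>2 = real CARD('g) - trace P"
proof -
  let ?Q = "mat 1 - P"
  have "transpose P = P" and "P ** P = P" using assms(1) by (auto simp: orth_proj_def)
  then have "transpose ?Q = ?Q" and "?Q ** ?Q = ?Q"
    by (simp_all add: transpose_diff matrix_diff_ldistrib matrix_diff_rdistrib)
  have "A - P ** A = ?Q ** A" by (simp add: matrix_diff_rdistrib)
  then have "(norm (A - P ** A))\<^sup>2 = trace (?Q ** (A ** transpose A) ** transpose ?Q)"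
    by (simp add: norm_sq_eq_trace_mult_transpose matrix_transpose_mul matrix_mul_assoc)
  also have "\<dots> = trace ?Q"
    using rows \<open>transpose ?Q = ?Q\<close> \<open>?Q ** ?Q = ?Q\<close> by simp
  finally show ?thesis by (simp add: trace_sub trace_I)
qed

section \<open>Correlation matrix of the maximally entangled state\<close>

definition mconj :: "complex^'a^'a \<Rightarrow> complex^'a^'a" where
  "mconj A = (\<chi> a b. cnj (A $ a $ b))"

lemma mconj_hermitian: "hermitian A \<Longrightarrow> hermitian (mconj A)"
  unfolding hermitian_def adjoint_def mconj_def by (simp add: vec_eq_iff)

lemma mtrace_mconj: "mtrace (mconj A) = cnj (mtrace A)"
  unfolding mtrace_def mconj_def by simp

lemma hs_inner_mconj: "hs_inner (mconj A) (mconj B) = cnj (hs_inner A B)"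
  unfolding hs_inner_def mconj_def by simp

lemma xvec_max_ent_state:
  assumes "su_generators (la :: 'ga::finite \<Rightarrow> complex^'a::finite^'a)"
  shows "xvec la (max_ent_state :: complex^('a \<times> 'a)^('a \<times> 'a)) i = 0"
proof -
  have "mtrace (la i) = 0" using assms unfolding su_generators_def by auto
  then have "mtrace (kron (la i) (mat 1) ** (max_ent_state :: complex^('a \<times> 'a)^('a \<times> 'a))) = 0"
    unfolding mtrace_mult_max_ent_state
    by (simp add: kron_def mat_def mtrace_def if_distrib[of "\<lambda>z. _ * z"] cong: if_cong)
  then show ?thesis unfolding xvec_def by simp
qed

lemma tcoef_max_ent_state:
  "tcoef la lb (max_ent_state :: complex^('a::finite \<times> 'a)^('a \<times> 'a)) i j
     = real CARD('a) / 4 * (mconj (la i) \<bullet> lb j)"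
proof -
  have "mtrace (kron (la i) (lb j) ** (max_ent_state :: complex^('a \<times> 'a)^('a \<times> 'a)))
      = hs_inner (mconj (la i)) (lb j) / of_nat CARD('a)"
    unfolding mtrace_mult_max_ent_state by (simp add: kron_def hs_inner_def mconj_def)
  then show ?thesis unfolding tcoef_def inner_eq_Re_hs_inner by simp
qed

definition generator_overlap ::
  "('ga::finite \<Rightarrow> complex^'a::finite^'a) \<Rightarrow> ('gb::finite \<Rightarrow> complex^'a^'a)
     \<Rightarrow> real^(unit + 'gb)^'ga"
  where "generator_overlap la lb
           = (\<chi> k c. case c of Inl _ \<Rightarrow> 0 | Inr j \<Rightarrow> (mconj (la k) \<bullet> lb j) / 2)"

lemma calT_max_ent_state:
  assumes "su_generators (la :: 'ga::finite \<Rightarrow> complex^'a::finite^'a)"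
  shows "calT la lb (max_ent_state :: complex^('a \<times> 'a)^('a \<times> 'a))
           = (1 / real CARD('a)) *\<^sub>R generator_overlap la lb"
proof -
  define m where "m = real CARD('a)"
  have "m > 0" unfolding m_def by simp
  then have "sqrt (2 / (m\<^sup>2 * m)) * sqrt (2 / m) = sqrt ((2 / m\<^sup>2)\<^sup>2)"
    by (simp add: real_sqrt_mult[symmetric] power2_eq_square field_simps)
  also have "\<dots> = 2 / m\<^sup>2" by simp
  finally have sqrt_prod: "sqrt (2 / (m\<^sup>2 * m)) * sqrt (2 / m) = 2 / m\<^sup>2" .
  have "calT la lb (max_ent_state :: complex^('a \<times> 'a)^('a \<times> 'a)) $ k $ c
             = ((1 / m) *\<^sub>R generator_overlap la lb) $ k $ c" for k c
  proof (cases c)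
    case Inl
    then show ?thesis by (simp add: calT_def generator_overlap_def xvec_max_ent_state[OF assms])
  next
    case Inr
    then show ?thesis
      using sqrt_prod unfolding calT_def generator_overlap_def m_def[symmetric]
      by (simp add: tcoef_max_ent_state m_def[symmetric] mult.assoc[symmetric])
        (simp add: power2_eq_square field_simps)
  qed
  then show ?thesis by (simp add: vec_eq_iff m_def)
qed

lemma generator_overlap_orthonormal_rows:
  assumes sa: "su_generators (la :: 'ga::finite \<Rightarrow> complex^'a::finite^'a)"
    and sb: "su_generators (lb :: 'gb::finite \<Rightarrow> complex^'a^'a)"
  shows "generator_overlap la lb ** transpose (generator_overlap la lb) = mat 1"
proof -
  have h: "\<And>j. hermitian (la j)" and t: "\<And>j. mtrace (la j) = 0"
    and tt: "\<And>i j. mtrace (la i ** la j) = (if i = j then 2 else 0)"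
    using sa unfolding su_generators_def by auto
  have "(\<Sum>j\<in>UNIV. (mconj (la i) \<bullet> lb j / 2) * (mconj (la k) \<bullet> lb j / 2))
          = (if i = k then 1 else 0)" for i k
  proof -
    have expansion: "mconj (la i) = (\<Sum>j\<in>UNIV. (mconj (la i) \<bullet> lb j / 2) *\<^sub>R lb j)"
      by (rule su_generators_expansion[OF sb mconj_hermitian[OF h]]) (simp add: mtrace_mconj t)
    have "mconj (la i) \<bullet> mconj (la k)
          = (\<Sum>j\<in>UNIV. (mconj (la i) \<bullet> lb j / 2) * (lb j \<bullet> mconj (la k)))"
      by (subst expansion) (simp add: inner_sum_left)
    moreover have "mconj (la i) \<bullet> mconj (la k) = (if i = k then 2 else 0)"
      by (simp add: inner_eq_Re_hs_inner hs_inner_mconj hs_inner_hermitian[OF h] tt)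
    ultimately show ?thesis
      by (simp add: inner_commute sum_divide_distrib[symmetric] split: if_splits)
  qed
  then show ?thesis
    unfolding generator_overlap_def matrix_matrix_mult_def transpose_def
    by (simp add: vec_eq_iff mat_def sum_UNIV_Plus)
qed

theorem D_P_max_ent_state:
  assumes sa: "su_generators (la :: 'ga::finite \<Rightarrow> complex^'a::finite^'a)"
    and sb: "su_generators (lb :: 'gb::finite \<Rightarrow> complex^'a^'a)"
  shows "D_P la lb (max_ent_state :: complex^('a \<times> 'a)^('a \<times> 'a))
           = (real CARD('a) - 1) / real CARD('a)"
proof -
  let ?C = "calT la lb (max_ent_state :: complex^('a \<times> 'a)^('a \<times> 'a))"
  let ?G = "generator_overlap la lb"
  define m where "m = real CARD('a)"
  have "m > 0" unfolding m_def by simp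
  have "CARD('ga) = CARD('a)\<^sup>2 - 1" using sa unfolding su_generators_def by simp
  then have card: "real CARD('ga) = m\<^sup>2 - 1"
    unfolding m_def by (simp add: Suc_leI)
  have norm_value: "(norm (?C - P ** ?C))\<^sup>2 = (m - 1) / m"
    if P: "orth_proj P" and rank: "rank P = CARD('a) - 1" for P
  proof -
    have "?C - P ** ?C = (1 / m) *\<^sub>R (?G - P ** ?G)"
      by (simp add: calT_max_ent_state[OF sa] m_def matrix_scalar_ac scalar_matrix_assoc[symmetric]
          scaleR_diff_right)
    then have "(norm (?C - P ** ?C))\<^sup>2 = (real CARD('ga) - trace P) / m\<^sup>2"
      by (simp add: power_divide
          norm_sq_orth_proj_complement[OF P generator_overlap_orthonormal_rows[OF sa sb]])
    also have "\<dots> = (m - 1) / m"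
      using \<open>m > 0\<close> by (simp add: card trace_orth_proj[OF P] rank m_def Suc_leI
          power2_eq_square field_simps)
    finally show ?thesis .
  qed
  have "CARD('a) - 1 \<le> CARD('ga)"
    using \<open>CARD('ga) = CARD('a)\<^sup>2 - 1\<close> by (simp add: power2_eq_square diff_le_mono)
  then obtain P0 :: "real^'ga^'ga" where P0: "orth_proj P0" "rank P0 = CARD('a) - 1"
    using exists_orth_proj_rank by blast
  have "{(norm (?C - P ** ?C))\<^sup>2 | P. orth_proj P \<and> rank P = CARD('a) - 1} = {(m - 1) / m}"
    using norm_value norm_value[OF P0] P0 by (intro equalityI subsetI) (auto intro!: exI[of _ P0])
  then show ?thesis unfolding D_P_def m_def by simp
qed

theorem mainTheorem5:
  fixes la :: "'ga::finite \<Rightarrow> complex^'a^'a"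
    and lb :: "'gb::finite \<Rightarrow> complex^'a^'a"
  assumes "su_generators la" and "su_generators lb"
  shows "D_P la lb (max_ent_state :: complex^('a \<times> 'a)^('a \<times> 'a)) = (real CARD('a) - 1) / real CARD('a)
       \<and> D_G (max_ent_state :: complex^('a \<times> 'a)^('a \<times> 'a)) = (real CARD('a) - 1) / real CARD('a)"
  using D_P_max_ent_state[OF assms] D_G_max_ent_state by simp

end
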